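(* Let $(\mathbf{L},\mathbf{R})\in\mathcal{P}_{\mathsf N}$ be centered and suppose it admits a dominance map. Then $\mathbf{L}\preceq^{\mathrm{PC}}\mathbf{R}$, i.e. $v\mathbf{L}\preceq v\mathbf{R}$ for every $v\in\mathbb{R}_+^{\mathsf N+1}$.
   Context: $\mathcal{P}_{\mathsf N}$ denotes the set of pairs $(\mathbf{L},\mathbf{R})$ of $(0,1)$-matrices, $\mathbf{L}$ of size $(\mathsf N+1)\times m_L$ and $\mathbf{R}$ of size $(\mathsf N+1)\times m_R$, such that some index $p\in[\mathsf N+1]$ has row $p$ of $\mathbf{L}$ and row $p$ of $\mathbf{R}$ both zero. $\mathbf{A}_{(i)}$ is the $i$-th row; $e$ the all-ones row vector; $|v|=\sum_k|v_k|$; $\le$ between vectors is componentwise. The pair is centered if it is balanced ($|\mathbf{L}_{(i)}|=|\mathbf{R}_{(i)}|$ for all $i$) and some row satisfies $\mathbf{L}_{(i)}=e=\mathbf{R}_{(i)}$ (so $m_L=m_R=m$). A dominance map is $f:\{0,1\}^{m}\to\{0,1\}^{m}$ with $|u|=|f(u)|$ and $\mathbf{L}u^T\le\mathbf{R}f(u)^T$ for all $u$. For $x,y\in\mathbb{R}^d$, $x\preceq y$ (majorization) means $\sum_{n=1}^k x^\downarrow_n\le\sum_{n=1}^k y^\downarrow_n$ for $k=1,\dots,d-1$ and $\sum_{n=1}^d x_n=\sum_{n=1}^d y_n$, where $x^\downarrow_n$ is the $n$-th largest component. $\mathbb{R}_+$ denotes the nonnegative reals, and $v$ is a row vector. *)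

theory Defs
  imports Complex_Main
begin

text \<open>Matrices are functions nat => nat => real; a matrix with n rows and m columns
  only uses the entries A i j with i < n, j < m.  Row vectors are nat => real
  (entries with index < length used).  Rows are indexed 0..N (i.e. N+1 rows).\<close>

definition zero_one_matrix :: "nat \<Rightarrow> nat \<Rightarrow> (nat \<Rightarrow> nat \<Rightarrow> real) \<Rightarrow> bool" where
  "zero_one_matrix n m A \<longleftrightarrow> (\<forall>i<n. \<forall>j<m. A i j = 0 \<or> A i j = 1)"

definition row_norm :: "nat \<Rightarrow> (nat \<Rightarrow> nat \<Rightarrow> real) \<Rightarrow> nat \<Rightarrow> real" where
  "row_norm m A i = (\<Sum>j<m. \<bar>A i j\<bar>)"

definition in_P :: "nat \<Rightarrow> nat \<Rightarrow> nat \<Rightarrow> (nat \<Rightarrow> nat \<Rightarrow> real) \<Rightarrow> (nat \<Rightarrow> nat \<Rightarrow> real) \<Rightarrow> bool" where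
  "in_P N mL mR L R \<longleftrightarrow> zero_one_matrix (N+1) mL L \<and> zero_one_matrix (N+1) mR R \<and>
     (\<exists>p<N+1. (\<forall>j<mL. L p j = 0) \<and> (\<forall>j<mR. R p j = 0))"

definition balanced :: "nat \<Rightarrow> nat \<Rightarrow> nat \<Rightarrow> (nat \<Rightarrow> nat \<Rightarrow> real) \<Rightarrow> (nat \<Rightarrow> nat \<Rightarrow> real) \<Rightarrow> bool" where
  "balanced N mL mR L R \<longleftrightarrow> (\<forall>i<N+1. row_norm mL L i = row_norm mR R i)"

definition centered :: "nat \<Rightarrow> nat \<Rightarrow> nat \<Rightarrow> (nat \<Rightarrow> nat \<Rightarrow> real) \<Rightarrow> (nat \<Rightarrow> nat \<Rightarrow> real) \<Rightarrow> bool" where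
  "centered N mL mR L R \<longleftrightarrow> balanced N mL mR L R \<and> mL = mR \<and>
     (\<exists>i<N+1. (\<forall>j<mL. L i j = 1) \<and> (\<forall>j<mR. R i j = 1))"

text \<open>{0,1}^m, as functions vanishing outside {0..<m}.\<close>
definition binvecs :: "nat \<Rightarrow> (nat \<Rightarrow> real) set" where
  "binvecs m = {u. (\<forall>j<m. u j = 0 \<or> u j = 1) \<and> (\<forall>j\<ge>m. u j = 0)}"

definition vnorm :: "nat \<Rightarrow> (nat \<Rightarrow> real) \<Rightarrow> real" where
  "vnorm m u = (\<Sum>j<m. \<bar>u j\<bar>)"

definition mat_vec :: "nat \<Rightarrow> (nat \<Rightarrow> nat \<Rightarrow> real) \<Rightarrow> (nat \<Rightarrow> real) \<Rightarrow> nat \<Rightarrow> real" where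
  "mat_vec m A u i = (\<Sum>j<m. A i j * u j)"

definition dominance_map :: "nat \<Rightarrow> nat \<Rightarrow> (nat \<Rightarrow> nat \<Rightarrow> real) \<Rightarrow> (nat \<Rightarrow> nat \<Rightarrow> real)
    \<Rightarrow> ((nat \<Rightarrow> real) \<Rightarrow> (nat \<Rightarrow> real)) \<Rightarrow> bool" where
  "dominance_map N m L R f \<longleftrightarrow> (\<forall>u\<in>binvecs m. f u \<in> binvecs m \<and> vnorm m u = vnorm m (f u) \<and>
      (\<forall>i<N+1. mat_vec m L u i \<le> mat_vec m R (f u) i))"

definition majorized :: "real list \<Rightarrow> real list \<Rightarrow> bool" where
  "majorized xs ys \<longleftrightarrow> length xs = length ys \<and>
     (\<forall>k\<in>{1..<length xs}. sum_list (take k (rev (sort xs))) \<le> sum_list (take k (rev (sort ys)))) \<and>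
     sum_list xs = sum_list ys"

definition vec_mat :: "nat \<Rightarrow> nat \<Rightarrow> (nat \<Rightarrow> real) \<Rightarrow> (nat \<Rightarrow> nat \<Rightarrow> real) \<Rightarrow> real list" where
  "vec_mat N m v A = map (\<lambda>j. \<Sum>i<N+1. v i * A i j) [0..<m]"

end

theory Submission
  imports Defs "HOL-Combinatorics.List_Permutation"
begin

text \<open>The sum of the \<open>k\<close> largest entries of a list is the largest sum over \<open>k\<close> of its
  positions (Ky Fan).  For \<open>v \<ge> 0\<close> and a set \<open>S\<close> of columns with indicator \<open>u\<close>, the sum of
  the entries of \<open>v L\<close> over \<open>S\<close> is \<open>v (L u\<^sup>T)\<close>; the dominance map bounds it by \<open>v (R f(u)\<^sup>T)\<close>,
  the sum of the entries of \<open>v R\<close> over a set of columns of the same size.  Hence every partial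
  sum of the decreasing rearrangement of \<open>v L\<close> is dominated by that of \<open>v R\<close>, and the total
  sums agree because the pair is balanced.\<close>

lemma sum_subset_le_sum_prefix:
  fixes zs :: "'a::{linorder, ordered_comm_monoid_add} list"
  assumes desc: "sorted (rev zs)" and T: "T \<subseteq> {..<length zs}"
  shows "(\<Sum>j\<in>T. zs ! j) \<le> (\<Sum>i<card T. zs ! i)"
proof -
  define k where "k = card T"
  have "finite T" using T finite_subset by blast
  define A where "A = T - {..<k}"
  define B where "B = {..<k} - T"
  have "card T = card (T \<inter> {..<k}) + card A"
    unfolding A_def using card_Int_Diff[OF \<open>finite T\<close>] .
  moreover have "k = card (T \<inter> {..<k}) + card B"
    unfolding B_def using card_Int_Diff[of "{..<k}" T] by (simp add: Int_commute)
  ultimately have "card A = card B" by (simp add: k_def)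
  then obtain h where h: "bij_betw h A B"
    using finite_same_card_bij \<open>finite T\<close> unfolding A_def B_def by blast
  have "(\<Sum>j\<in>A. zs ! j) \<le> (\<Sum>j\<in>A. zs ! h j)"
  proof (rule sum_mono)
    fix j assume "j \<in> A"
    moreover have "h j \<in> B" using h \<open>j \<in> A\<close> bij_betwE by blast
    ultimately have "h j \<le> j" "j < length zs" using T unfolding A_def B_def by auto
    then show "zs ! j \<le> zs ! h j" using sorted_rev_nth_mono[OF desc] by blast
  qed
  also have "\<dots> = (\<Sum>j\<in>B. zs ! j)" using sum.reindex_bij_betw[OF h] .
  finally have "(\<Sum>j\<in>A. zs ! j) \<le> (\<Sum>j\<in>B. zs ! j)" .
  moreover have "(\<Sum>j\<in>T. zs ! j) = (\<Sum>j\<in>T \<inter> {..<k}. zs ! j) + (\<Sum>j\<in>A. zs ! j)"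
    unfolding A_def using sum.Int_Diff[OF \<open>finite T\<close>] by blast
  moreover have "(\<Sum>i<k. zs ! i) = (\<Sum>j\<in>T \<inter> {..<k}. zs ! j) + (\<Sum>j\<in>B. zs ! j)"
    unfolding B_def using sum.Int_Diff[of "{..<k}" _ T] by (simp add: Int_commute)
  ultimately show ?thesis unfolding k_def by (metis add_left_mono)
qed

lemma sum_list_take_eq_sum_nth:
  "k \<le> length zs \<Longrightarrow> sum_list (take k zs) = (\<Sum>i<k. zs ! i)"
  by (simp add: sum_list_sum_nth min_absorb1 atLeast0LessThan)

lemma sum_subset_le_sum_take_rev_sort:
  fixes ys :: "'a::{linorder, ordered_comm_monoid_add} list"
  assumes S: "S \<subseteq> {..<length ys}"
  shows "(\<Sum>j\<in>S. ys ! j) \<le> sum_list (take (card S) (rev (sort ys)))"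
proof -
  define zs where "zs = rev (sort ys)"
  have "mset ys = mset zs" unfolding zs_def by simp
  then obtain g where g: "bij_betw g {..<length ys} {..<length zs}"
    and ys_zs: "\<forall>i<length ys. ys ! i = zs ! g i"
    using permutation_Ex_bij by blast
  have inj: "inj_on g S" using inj_on_subset[OF bij_betw_imp_inj_on[OF g] S] .
  have "g ` S \<subseteq> {..<length zs}"
    using image_mono[OF S, of g] unfolding bij_betw_imp_surj_on[OF g] .
  have "card S \<le> length zs" using S card_mono[of "{..<length ys}" S] by (simp add: zs_def)
  have "(\<Sum>j\<in>S. ys ! j) = (\<Sum>j\<in>S. zs ! g j)" using ys_zs S by (intro sum.cong) auto
  also have "\<dots> = (\<Sum>j\<in>g ` S. zs ! j)" by (simp add: sum.reindex[OF inj])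
  also have "\<dots> \<le> (\<Sum>i<card (g ` S). zs ! i)"
    using sum_subset_le_sum_prefix[OF _ \<open>g ` S \<subseteq> {..<length zs}\<close>] unfolding zs_def by simp
  also have "\<dots> = sum_list (take (card S) zs)"
    using \<open>card S \<le> length zs\<close> card_image[OF inj] by (simp add: sum_list_take_eq_sum_nth)
  finally show ?thesis unfolding zs_def .
qed

lemma sum_take_rev_sort_eq_sum_subset:
  fixes xs :: "'a::{linorder, comm_monoid_add} list"
  assumes "k \<le> length xs"
  obtains S where "S \<subseteq> {..<length xs}" "card S = k"
    "sum_list (take k (rev (sort xs))) = (\<Sum>j\<in>S. xs ! j)"
proof -
  define zs where "zs = rev (sort xs)"
  have "mset zs = mset xs" unfolding zs_def by simp
  then obtain g where g: "bij_betw g {..<length zs} {..<length xs}"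
    and zs_xs: "\<forall>i<length zs. zs ! i = xs ! g i"
    using permutation_Ex_bij by blast
  have "k \<le> length zs" using assms unfolding zs_def by simp
  then have sub: "{..<k} \<subseteq> {..<length zs}" by simp
  have inj: "inj_on g {..<k}" using inj_on_subset[OF bij_betw_imp_inj_on[OF g] sub] .
  have "g ` {..<k} \<subseteq> {..<length xs}"
    using image_mono[OF sub, of g] unfolding bij_betw_imp_surj_on[OF g] .
  moreover have "card (g ` {..<k}) = k" using card_image[OF inj] by simp
  moreover have "sum_list (take k zs) = (\<Sum>i<k. xs ! g i)"
    using \<open>k \<le> length zs\<close> zs_xs by (simp add: sum_list_take_eq_sum_nth)
  moreover have "\<dots> = (\<Sum>j\<in>g ` {..<k}. xs ! j)" by (simp add: sum.reindex[OF inj])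
  ultimately show ?thesis using that unfolding zs_def by simp
qed

lemma majorizedI:
  fixes xs ys :: "real list"
  assumes "length xs = length ys" and "sum_list xs = sum_list ys"
    and "\<And>S. S \<subseteq> {..<length xs} \<Longrightarrow>
           \<exists>S'\<subseteq>{..<length ys}. card S' = card S \<and> (\<Sum>j\<in>S. xs ! j) \<le> (\<Sum>j\<in>S'. ys ! j)"
  shows "majorized xs ys"
  unfolding majorized_def
proof (intro conjI ballI)
  fix k assume "k \<in> {1..<length xs}"
  then have "k \<le> length xs" by simp
  then obtain S where S: "S \<subseteq> {..<length xs}" "card S = k"
    and top_xs: "sum_list (take k (rev (sort xs))) = (\<Sum>j\<in>S. xs ! j)"
    by (rule sum_take_rev_sort_eq_sum_subset)
  obtain S' where "S' \<subseteq> {..<length ys}" "card S' = k" "(\<Sum>j\<in>S. xs ! j) \<le> (\<Sum>j\<in>S'. ys ! j)"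
    using assms(3)[OF S(1)] S(2) by blast
  then show "sum_list (take k (rev (sort xs))) \<le> sum_list (take k (rev (sort ys)))"
    using top_xs sum_subset_le_sum_take_rev_sort[of S' ys] by simp
qed (use assms in auto)

lemma length_vec_mat [simp]: "length (vec_mat N m v A) = m"
  unfolding vec_mat_def by simp

lemma nth_vec_mat [simp]: "j < m \<Longrightarrow> vec_mat N m v A ! j = (\<Sum>i<N+1. v i * A i j)"
  unfolding vec_mat_def by simp

lemma sum_mult_vec_mat:
  "(\<Sum>j<m. u j * vec_mat N m v A ! j) = (\<Sum>i<N+1. v i * mat_vec m A u i)"
  unfolding mat_vec_def
  by (simp add: sum_distrib_left sum.swap[of _ "{..<m}"] mult_ac del: sum.lessThan_Suc)

lemma zero_one_matrix_nonneg:
  "zero_one_matrix n m A \<Longrightarrow> \<forall>i<n. \<forall>j<m. A i j \<ge> 0"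
  unfolding zero_one_matrix_def by (metis order_refl zero_le_one)

lemma sum_list_vec_mat:
  assumes "\<forall>i<N+1. \<forall>j<m. A i j \<ge> 0"
  shows "sum_list (vec_mat N m v A) = (\<Sum>i<N+1. v i * row_norm m A i)"
proof -
  have "sum_list (vec_mat N m v A) = (\<Sum>j<m. 1 * vec_mat N m v A ! j)"
    by (simp add: sum_list_sum_nth atLeast0LessThan)
  also have "\<dots> = (\<Sum>i<N+1. v i * mat_vec m A (\<lambda>_. 1) i)"
    by (rule sum_mult_vec_mat)
  also have "\<dots> = (\<Sum>i<N+1. v i * row_norm m A i)"
    using assms unfolding mat_vec_def row_norm_def by (intro sum.cong) auto
  finally show ?thesis .
qed

lemma binvecs_iff: "u \<in> binvecs m \<longleftrightarrow> (\<exists>S\<subseteq>{..<m}. u = (\<lambda>j. of_bool (j \<in> S)))"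
proof
  assume "u \<in> binvecs m"
  then have "u j = of_bool (j \<in> {j. j < m \<and> u j = 1})" for j
    unfolding binvecs_def by (cases "j < m") auto
  then show "\<exists>S\<subseteq>{..<m}. u = (\<lambda>j. of_bool (j \<in> S))"
    by (intro exI[of _ "{j. j < m \<and> u j = 1}"]) auto
qed (auto simp: binvecs_def)

lemma vnorm_of_bool: "S \<subseteq> {..<m} \<Longrightarrow> vnorm m (\<lambda>j. of_bool (j \<in> S)) = card S"
  unfolding vnorm_def by (simp add: Int_absorb1)

lemma sum_subset_eq_sum_of_bool_mult:
  fixes x :: "nat \<Rightarrow> 'a::semiring_1"
  shows "S \<subseteq> {..<m} \<Longrightarrow> (\<Sum>j\<in>S. x j) = (\<Sum>j<m. of_bool (j \<in> S) * x j)"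
  by (simp add: Int_absorb1)

lemma dominance_map_sum_subset_le:
  assumes f: "dominance_map N m L R f" and v: "\<forall>i<N+1. v i \<ge> 0" and S: "S \<subseteq> {..<m}"
  shows "\<exists>S'\<subseteq>{..<m}. card S' = card S \<and>
           (\<Sum>j\<in>S. vec_mat N m v L ! j) \<le> (\<Sum>j\<in>S'. vec_mat N m v R ! j)"
proof -
  define u :: "nat \<Rightarrow> real" where "u = (\<lambda>j. of_bool (j \<in> S))"
  have "u \<in> binvecs m" using S unfolding u_def binvecs_iff by blast
  then have "f u \<in> binvecs m" and norm_eq: "vnorm m u = vnorm m (f u)"
    and dom: "\<forall>i<N+1. mat_vec m L u i \<le> mat_vec m R (f u) i"
    using f unfolding dominance_map_def by auto
  then obtain S' where S': "S' \<subseteq> {..<m}" "f u = (\<lambda>j. of_bool (j \<in> S'))"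
    unfolding binvecs_iff by blast
  have "card S' = card S"
    using norm_eq vnorm_of_bool[OF S] vnorm_of_bool[OF S'(1)] S'(2) unfolding u_def by simp
  moreover have "(\<Sum>j\<in>S. vec_mat N m v L ! j) = (\<Sum>i<N+1. v i * mat_vec m L u i)"
    unfolding u_def sum_subset_eq_sum_of_bool_mult[OF S] by (rule sum_mult_vec_mat)
  moreover have "\<dots> \<le> (\<Sum>i<N+1. v i * mat_vec m R (f u) i)"
    using dom v by (intro sum_mono mult_left_mono) auto
  moreover have "\<dots> = (\<Sum>j\<in>S'. vec_mat N m v R ! j)"
    unfolding S'(2) sum_subset_eq_sum_of_bool_mult[OF S'(1)] by (rule sum_mult_vec_mat[symmetric])
  ultimately show ?thesis using S'(1) by auto
qed

theorem theorem3:
  fixes N mL mR :: nat and L R :: "nat \<Rightarrow> nat \<Rightarrow> real"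
  assumes "in_P N mL mR L R"
    and "centered N mL mR L R"
    and "\<exists>f. dominance_map N mL L R f"
  shows "\<forall>v::nat \<Rightarrow> real. (\<forall>i<N+1. v i \<ge> 0) \<longrightarrow>
           majorized (vec_mat N mL v L) (vec_mat N mR v R)"
proof (intro allI impI)
  fix v :: "nat \<Rightarrow> real"
  assume v: "\<forall>i<N+1. v i \<ge> 0"
  obtain f where f: "dominance_map N mL L R f" using assms(3) by blast
  have "mR = mL" and bal: "\<forall>i<N+1. row_norm mL L i = row_norm mR R i"
    using assms(2) unfolding centered_def balanced_def by auto
  have "zero_one_matrix (N+1) mL L" and "zero_one_matrix (N+1) mR R"
    using assms(1) unfolding in_P_def by simp_all
  then have L_nonneg: "\<forall>i<N+1. \<forall>j<mL. L i j \<ge> 0" and R_nonneg: "\<forall>i<N+1. \<forall>j<mR. R i j \<ge> 0"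
    by (simp_all add: zero_one_matrix_nonneg)
  have "sum_list (vec_mat N mL v L) = sum_list (vec_mat N mR v R)"
    unfolding sum_list_vec_mat[OF L_nonneg] sum_list_vec_mat[OF R_nonneg] using bal by simp
  then show "majorized (vec_mat N mL v L) (vec_mat N mR v R)"
    unfolding \<open>mR = mL\<close>
    by (intro majorizedI) (simp_all add: dominance_map_sum_subset_le[OF f v])
qed

end
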